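(* Let $\beta$ be a unital *-endomorphism of $\mathcal M$ that is localized in $I_\circ$ and transportable, i.e. for each $I_1\in\mathcal J_z$ there is a unitary $Q_{\beta;I_\circ,I_1}\in\mathcal M$ with $\mathrm{Ad}(Q_{\beta;I_\circ,I_1})\circ\beta$ localized in $I_1$. Then $\sigma_\beta\in\Delta_{\mathcal N}(I_\circ)$. More precisely, for every $I_1\in\mathcal J_z$, if $u_{\theta;I_\circ,I_1}\in\mathcal N$ is a unitary with $\mathrm{Ad}(u_{\theta;I_\circ,I_1})\circ\theta$ localized in $I_1$, then $\mathrm{Ad}(u_{\theta;I_\circ,I_1}\,\gamma(Q_{\beta;I_\circ,I_1}))\circ\sigma_\beta$ is localized in $I_1$.
   Context: Standing setting. Fix $z\in S^1$; $\mathcal J_z$ is the set of nonempty open intervals $I\subset S^1$ whose closure does not contain $z$; $I'$ denotes the interior of the complement of $I$. $\mathcal N\subset\mathcal M$ is a quantum field theoretical net of subfactors over $\mathcal J_z$: to each $I\in\mathcal J_z$ are assigned von Neumann factors $N(I)\subset M(I)$ on a separable Hilbert space $\mathcal H$, isotone in $I$; there is a vector $\Omega$ cyclic and separating for every $M(I)$ on $\mathcal H$ and for every $N(I)$ on $\mathcal H_0=\overline{\mathcal N\Omega}$; there are faithful normal conditional expectations $E_I:M(I)\to N(I)$ preserving $\langle\Omega,\cdot\,\Omega\rangle$ with $E_J|_{M(I)}=E_I$ for $I\subset J$; and $N(I_1)\subset M(I_2)'$ whenever $I_1\cap I_2=\emptyset$. $\mathcal N,\mathcal M$ also denote the C*-algebras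 (norm closures of unions). Assume: $\mathcal M$ is local; $[M:N]=[M(I):N(I)]<\infty$; with $\pi_0$ the representation of $\mathcal N$ on $\mathcal H_0$ and $A(I)=\pi_0(N(I))$, the net $\mathcal A$ is Haag dual, $A(I)=\mathcal C_{\mathcal A}(I')'$ ($\mathcal C_{\mathcal A}(R)$ = norm closure of $\bigcup\{A(J):J\subset R\}$), and strongly additive. An endomorphism of $\mathcal N$ (resp. $\mathcal M$) is localized in $I$ if it acts trivially on $N(J)$ (resp. $M(J)$) for all $J\in\mathcal J_z$, $J\subset I'$. $\Delta_{\mathcal N}(I)$: unital *-endomorphisms of $\mathcal N$ localized in $I$ and transportable (for each $J\in\mathcal J_z$ a unitary $u\in\mathcal N$ with $\mathrm{Ad}(u)\circ\lambda$ localized in $J$). Canonical endomorphism: fix $I_\circ$. $\gamma$ is an endomorphism of $\mathcal M$ with $\gamma(\mathcal M)\subset\mathcal N$ restricting to a canonical endomorphism of $M(I)$ into $N(I)$ for all $I\supset I_\circ$; $\theta=\gamma|_{\mathcal N}\in\Delta_{\mathcal N}(I_\circ)$. $\sigma$-restriction: for an endomorphism $\beta$ of $\mathcal M$, $\sigma_\beta=\gamma\circ\beta|_{\mathcal N}$. *)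

theory Defs
  imports "HOL-Analysis.Analysis"
begin

definition S1 :: "complex set" where
  "S1 = sphere 0 1"

definition arc :: "complex set \<Rightarrow> bool" where
  "arc I \<longleftrightarrow> (\<exists>a b::real. a < b \<and> b - a < 2 * pi \<and> I = cis ` {a<..<b})"

definition Jz :: "complex \<Rightarrow> complex set set" where
  "Jz z = {I. arc I \<and> z \<notin> closure I}"

definition compl_int :: "complex set \<Rightarrow> complex set" where
  "compl_int I = (top_of_set S1) interior_of (S1 - I)"

text \<open>The ambient algebra is an abstract real normed unital algebra 'a with an
involution st and a central element ii playing the role of the imaginary unit i1;
complex scalars are a *R 1 + b *R ii.\<close>
definition star_algebra :: "('a::real_normed_algebra_1 \<Rightarrow> 'a) \<Rightarrow> 'a \<Rightarrow> bool" where
  "star_algebra st ii \<longleftrightarrow>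
     (\<forall>x. st (st x) = x) \<and> (\<forall>x y. st (x + y) = st x + st y) \<and>
     (\<forall>x y. st (x * y) = st y * st x) \<and> (\<forall>r x. st (r *\<^sub>R x) = r *\<^sub>R st x) \<and>
     ii * ii = - 1 \<and> st ii = - ii \<and> (\<forall>x. ii * x = x * ii) \<and>
     (\<forall>x. norm (st x * x) = (norm x)\<^sup>2)"

definition star_subalgebra :: "('a::real_normed_algebra_1 \<Rightarrow> 'a) \<Rightarrow> 'a \<Rightarrow> 'a set \<Rightarrow> bool" where
  "star_subalgebra st ii A \<longleftrightarrow> 1 \<in> A \<and> ii \<in> A \<and>
     (\<forall>x\<in>A. \<forall>y\<in>A. x + y \<in> A \<and> x * y \<in> A) \<and>
     (\<forall>x\<in>A. \<forall>r. r *\<^sub>R x \<in> A) \<and> (\<forall>x\<in>A. st x \<in> A)"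

definition is_factor :: "'a::real_normed_algebra_1 \<Rightarrow> 'a set \<Rightarrow> bool" where
  "is_factor ii A \<longleftrightarrow> (\<forall>x\<in>A. (\<forall>y\<in>A. x * y = y * x) \<longrightarrow>
       (\<exists>a b. x = a *\<^sub>R 1 + b *\<^sub>R ii))"

definition star_endo :: "('a::real_normed_algebra_1 \<Rightarrow> 'a) \<Rightarrow> 'a \<Rightarrow> 'a set \<Rightarrow> ('a \<Rightarrow> 'a) \<Rightarrow> bool" where
  "star_endo st ii A f \<longleftrightarrow> (\<forall>x\<in>A. f x \<in> A) \<and>
     (\<forall>x\<in>A. \<forall>y\<in>A. f (x + y) = f x + f y \<and> f (x * y) = f x * f y) \<and>
     (\<forall>x\<in>A. \<forall>r. f (r *\<^sub>R x) = r *\<^sub>R f x) \<and> (\<forall>x\<in>A. f (ii * x) = ii * f x) \<and>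
     (\<forall>x\<in>A. f (st x) = st (f x)) \<and> f 1 = 1"

definition unitary_in :: "('a::real_normed_algebra_1 \<Rightarrow> 'a) \<Rightarrow> 'a set \<Rightarrow> 'a \<Rightarrow> bool" where
  "unitary_in st A u \<longleftrightarrow> u \<in> A \<and> st u * u = 1 \<and> u * st u = 1"

definition Ad :: "('a::real_normed_algebra_1 \<Rightarrow> 'a) \<Rightarrow> 'a \<Rightarrow> 'a \<Rightarrow> 'a" where
  "Ad st u x = u * x * st u"

definition quasilocal :: "complex \<Rightarrow> (complex set \<Rightarrow> 'a::real_normed_algebra_1 set) \<Rightarrow> 'a set" where
  "quasilocal z A = closure (\<Union>I\<in>Jz z. A I)"

definition localized_in :: "complex \<Rightarrow> (complex set \<Rightarrow> 'a set) \<Rightarrow> ('a \<Rightarrow> 'a) \<Rightarrow> complex set \<Rightarrow> bool" where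
  "localized_in z A f I \<longleftrightarrow> (\<forall>J\<in>Jz z. J \<subseteq> compl_int I \<longrightarrow> (\<forall>x\<in>A J. f x = x))"

definition Delta :: "('a::real_normed_algebra_1 \<Rightarrow> 'a) \<Rightarrow> 'a \<Rightarrow> complex \<Rightarrow> (complex set \<Rightarrow> 'a set)
     \<Rightarrow> complex set \<Rightarrow> ('a \<Rightarrow> 'a) set" where
  "Delta st ii z A I = {l. star_endo st ii (quasilocal z A) l \<and> localized_in z A l I \<and>
      (\<forall>J\<in>Jz z. \<exists>u. unitary_in st (quasilocal z A) u \<and> localized_in z A (Ad st u \<circ> l) J)}"

text \<open>Algebraic part of a QFT net of subfactors N \<subseteq> M over J_z, with M local.\<close>
definition net_of_subfactors :: "('a::real_normed_algebra_1 \<Rightarrow> 'a) \<Rightarrow> 'a \<Rightarrow> complex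
     \<Rightarrow> (complex set \<Rightarrow> 'a set) \<Rightarrow> (complex set \<Rightarrow> 'a set) \<Rightarrow> bool" where
  "net_of_subfactors st ii z N M \<longleftrightarrow> star_algebra st ii \<and> z \<in> S1 \<and>
     (\<forall>I\<in>Jz z. star_subalgebra st ii (N I) \<and> star_subalgebra st ii (M I) \<and>
                is_factor ii (N I) \<and> is_factor ii (M I) \<and> N I \<subseteq> M I) \<and>
     (\<forall>I\<in>Jz z. \<forall>J\<in>Jz z. I \<subseteq> J \<longrightarrow> N I \<subseteq> N J \<and> M I \<subseteq> M J) \<and>
     (\<forall>I1\<in>Jz z. \<forall>I2\<in>Jz z. I1 \<inter> I2 = {} \<longrightarrow>
        (\<forall>x\<in>N I1. \<forall>y\<in>M I2. x * y = y * x) \<and> (\<forall>x\<in>M I1. \<forall>y\<in>M I2. x * y = y * x))"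

end

theory Submission
  imports Defs
begin

text \<open>
  Since \<open>J\<^sub>z\<close> is directed, the quasilocal algebras are norm closures of directed unions of
  *-subalgebras, hence *-subalgebras; so \<open>\<sigma>\<^sub>\<beta> = (\<gamma> \<circ> \<beta>)|\<^sub>N\<close> is a unital *-endomorphism of
  the quasilocal algebra of \<open>\<N>\<close>, because \<open>\<gamma>\<close> maps \<open>\<M>\<close> into \<open>\<N>\<close>. On \<open>N(J)\<close> with
  \<open>J \<subseteq> I\<^sub>\<circ>'\<close> both \<open>\<beta>\<close> and \<open>\<theta>\<close> act trivially, so \<open>\<sigma>\<^sub>\<beta>\<close> does too. For transportability,
  if \<open>Ad Q \<circ> \<beta>\<close> and \<open>Ad u \<circ> \<gamma>\<close> are localized in \<open>I\<^sub>1\<close>, then for \<open>x \<in> N(J)\<close>,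
  \<open>J \<subseteq> I\<^sub>1'\<close>: \<open>Ad (u \<gamma>(Q)) (\<gamma> (\<beta> x)) = Ad u (\<gamma> (Ad Q (\<beta> x))) = Ad u (\<gamma> x) = x\<close>.
\<close>

lemma image_add_greaterThanLessThan:
  fixes c :: "'a::linordered_ab_group_add"
  shows "(+) c ` {a<..<b} = {c + a<..<c + b}"
proof -
  have "x \<in> (+) c ` {a<..<b}" if "c + a < x" "x < c + b" for x
    using that by (intro image_eqI[of _ _ "x - c"]) (auto simp: algebra_simps)
  thus ?thesis by auto
qed

lemma cis_eq_cis_iff: "cis s = cis t \<longleftrightarrow> (\<exists>n::int. s = t + 2 * pi * of_int n)"
  by (auto simp: complex_eq_iff sin_cos_eq_iff[symmetric])

lemma cis_translate_image: "cis ` ((+) (2 * pi * of_int k) ` S) = cis ` S"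
proof -
  have "cis (2 * pi * of_int k + t) = cis t" for t
    using cis_eq_cis_iff by (metis add.commute)
  thus ?thesis by (simp add: image_image)
qed

lemma cis_neq_within_period:
  assumes "c < t" "t < c + 2 * pi"
  shows "cis t \<noteq> cis c"
proof
  assume "cis t = cis c"
  then obtain n :: int where n: "t = c + 2 * pi * of_int n" by (auto simp: cis_eq_cis_iff)
  with assms have "0 < real_of_int n" "real_of_int n < 1" by (auto simp: zero_less_mult_iff)
  thus False by simp
qed

lemma closure_cis_arc:
  assumes "a < b"
  shows "closure (cis ` {a<..<b}) = cis ` {a..b}"
proof
  show "closure (cis ` {a<..<b}) \<subseteq> cis ` {a..b}"
    by (intro closure_minimal image_mono compact_imp_closed compact_continuous_image)
       (auto intro!: continuous_intros)
  have "cis ` closure {a<..<b} \<subseteq> closure (cis ` {a<..<b})"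
    by (intro image_closure_subset) (auto intro!: continuous_intros closure_subset)
  with assms show "cis ` {a..b} \<subseteq> closure (cis ` {a<..<b})" by simp
qed

lemma Jz_arc_within_period:
  assumes z: "z = cis c" and I: "I \<in> Jz z"
  shows "\<exists>a b. c < a \<and> a < b \<and> b < c + 2 * pi \<and> I = cis ` {a<..<b}"
proof -
  obtain a0 b0 where ab0: "a0 < b0" "b0 - a0 < 2 * pi" "I = cis ` {a0<..<b0}"
    and zI: "z \<notin> closure I"
    using I by (auto simp: Jz_def arc_def)
  define k where "k = - \<lfloor>(a0 - c) / (2 * pi)\<rfloor>"
  define a where "a = 2 * pi * of_int k + a0"
  define b where "b = 2 * pi * of_int k + b0"
  have shift: "(+) (2 * pi * of_int k) ` {a0<..<b0} = {a<..<b}"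
              "(+) (2 * pi * of_int k) ` {a0..b0} = {a..b}"
    by (simp_all add: a_def b_def image_add_greaterThanLessThan)
  have "c \<le> a" "a < c + 2 * pi"
    using floor_divide_lower[of "2 * pi" "a0 - c"] floor_divide_upper[of "2 * pi" "a0 - c"]
    by (auto simp: a_def k_def algebra_simps)
  have "cis c \<notin> cis ` {a..b}"
    using zI z ab0 closure_cis_arc[of a0 b0] cis_translate_image[of k "{a0..b0}"] shift
    by simp
  moreover have "cis (c + 2 * pi) = cis c"
    by (simp flip: cis_mult)
  ultimately have "c \<notin> {a..b}" "c + 2 * pi \<notin> {a..b}"
    by (metis image_eqI)+
  moreover have "I = cis ` {a<..<b}"
    using ab0 cis_translate_image[of k "{a0<..<b0}"] shift by simp
  ultimately show ?thesis
    using \<open>c \<le> a\<close> \<open>a < c + 2 * pi\<close> ab0 by (intro exI[of _ a] exI[of _ b]) (auto simp: a_def b_def)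
qed

lemma cis_arc_in_Jz:
  assumes "c < a" "a < b" "b < c + 2 * pi"
  shows "cis ` {a<..<b} \<in> Jz (cis c)"
proof -
  have "arc (cis ` {a<..<b})"
    unfolding arc_def using assms by (intro exI[of _ a] exI[of _ b]) auto
  moreover have "cis c \<notin> cis ` {a..b}"
  proof
    assume "cis c \<in> cis ` {a..b}"
    then obtain t where "t \<in> {a..b}" "cis t = cis c" by auto
    with assms cis_neq_within_period[of c t] show False by auto
  qed
  ultimately show ?thesis
    using assms closure_cis_arc[of a b] by (simp add: Jz_def)
qed

lemma S1_cis_Arg:
  assumes "z \<in> S1"
  shows "cis (Arg z) = z"
proof -
  have "norm z = 1" using assms by (simp add: S1_def)
  thus ?thesis using rcis_cmod_Arg[of z] by (simp add: cis_rcis_eq)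
qed

lemma Jz_nonempty:
  assumes "z \<in> S1"
  shows "Jz z \<noteq> {}"
proof -
  have "cis ` {Arg z + 1<..<Arg z + 2} \<in> Jz (cis (Arg z))"
    using pi_gt3 by (intro cis_arc_in_Jz) auto
  thus ?thesis using S1_cis_Arg[OF assms] by auto
qed

lemma Jz_directed:
  assumes z: "z \<in> S1" and I: "I \<in> Jz z" and J: "J \<in> Jz z"
  shows "\<exists>K\<in>Jz z. I \<subseteq> K \<and> J \<subseteq> K"
proof -
  have z_cis: "z = cis (Arg z)"
    using S1_cis_Arg[OF z] by simp
  obtain a1 b1 where 1: "Arg z < a1" "a1 < b1" "b1 < Arg z + 2 * pi" "I = cis ` {a1<..<b1}"
    using Jz_arc_within_period[OF z_cis I] by blast
  obtain a2 b2 where 2: "Arg z < a2" "a2 < b2" "b2 < Arg z + 2 * pi" "J = cis ` {a2<..<b2}"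
    using Jz_arc_within_period[OF z_cis J] by blast
  let ?K = "cis ` {min a1 a2<..<max b1 b2}"
  have "?K \<in> Jz z"
    using 1 2 cis_arc_in_Jz[of "Arg z" "min a1 a2" "max b1 b2"] z_cis by auto
  moreover have "I \<subseteq> ?K" "J \<subseteq> ?K"
    unfolding 1(4) 2(4) by (auto intro!: image_mono)
  ultimately show ?thesis by blast
qed

lemma star_algebra_norm_star:
  assumes "star_algebra st ii"
  shows "norm (st x) = norm x"
proof -
  have le: "norm y \<le> norm (st y)" for y
  proof (cases "y = 0")
    case False
    have "norm y * norm y = norm (st y * y)"
      using assms by (simp add: star_algebra_def power2_eq_square)
    also have "\<dots> \<le> norm (st y) * norm y"
      by (rule norm_mult_ineq)
    finally show ?thesis using False by simp
  qed simp
  have "norm (st x) \<le> norm (st (st x))" by (rule le)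
  also have "st (st x) = x" using assms by (simp add: star_algebra_def)
  finally show ?thesis using le[of x] by simp
qed

lemma star_algebra_bounded_linear:
  assumes "star_algebra st ii"
  shows "bounded_linear st"
  using assms star_algebra_norm_star[OF assms]
  by (intro bounded_linear_intro[where K = 1]) (auto simp: star_algebra_def)

lemma closure_closed_binop:
  assumes "continuous_on UNIV (\<lambda>p. f (fst p) (snd p))" and "\<forall>x\<in>U. \<forall>y\<in>U. f x y \<in> U"
    and "x \<in> closure U" and "y \<in> closure U"
  shows "f x y \<in> closure U"
proof -
  have "(\<lambda>p. f (fst p) (snd p)) ` closure (U \<times> U) \<subseteq> closure U"
    using assms(1,2) by (intro image_closure_subset) (auto intro: continuous_on_subset closure_subset[THEN subsetD])
  moreover have "(x, y) \<in> closure (U \<times> U)"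
    using assms(3,4) by (simp add: closure_Times)
  ultimately show ?thesis by auto
qed

lemma closure_closed_unop:
  assumes "continuous_on UNIV f" and "\<forall>x\<in>U. f x \<in> U" and "x \<in> closure U"
  shows "f x \<in> closure U"
proof -
  have "f ` closure U \<subseteq> closure U"
    using assms(1,2) by (intro image_closure_subset) (auto intro: continuous_on_subset closure_subset[THEN subsetD])
  with assms(3) show ?thesis by blast
qed

lemma star_subalgebra_closure:
  assumes "star_algebra st ii" and A: "star_subalgebra st ii A"
  shows "star_subalgebra st ii (closure A)"
  unfolding star_subalgebra_def
proof (intro conjI ballI allI)
  show "1 \<in> closure A" "ii \<in> closure A"
    using A closure_subset by (auto simp: star_subalgebra_def)
next
  fix x y assume xy: "x \<in> closure A" "y \<in> closure A"
  have "continuous_on UNIV (\<lambda>p. fst p + snd p :: 'a)"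
    by (intro continuous_intros)
  with A xy show "x + y \<in> closure A"
    by (intro closure_closed_binop[where f = "(+)"]) (auto simp: star_subalgebra_def)
  have "continuous_on UNIV (\<lambda>p. fst p * snd p :: 'a)"
    by (intro continuous_intros)
  with A xy show "x * y \<in> closure A"
    by (intro closure_closed_binop[where f = "(*)"]) (auto simp: star_subalgebra_def)
next
  fix x r assume "x \<in> closure A"
  with A show "r *\<^sub>R x \<in> closure A"
    by (intro closure_closed_unop[where f = "scaleR r"] continuous_intros) (auto simp: star_subalgebra_def)
next
  fix x assume "x \<in> closure A"
  with A show "st x \<in> closure A"
    using linear_continuous_on[OF star_algebra_bounded_linear[OF assms(1)]]
    by (intro closure_closed_unop[where f = st]) (auto simp: star_subalgebra_def)
qed

lemma star_subalgebra_directed_UN: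
  assumes "\<J> \<noteq> {}" and sub: "\<forall>I\<in>\<J>. star_subalgebra st ii (A I)"
    and directed: "\<forall>I\<in>\<J>. \<forall>J\<in>\<J>. \<exists>K\<in>\<J>. A I \<subseteq> A K \<and> A J \<subseteq> A K"
  shows "star_subalgebra st ii (\<Union>I\<in>\<J>. A I)"
  unfolding star_subalgebra_def
proof (intro conjI ballI allI)
  show "1 \<in> (\<Union>I\<in>\<J>. A I)" "ii \<in> (\<Union>I\<in>\<J>. A I)"
    using assms(1) sub by (auto simp: star_subalgebra_def)
  fix x y assume "x \<in> (\<Union>I\<in>\<J>. A I)" "y \<in> (\<Union>I\<in>\<J>. A I)"
  then obtain K where K: "K \<in> \<J>" "x \<in> A K" "y \<in> A K"
    using directed by blast
  with sub have "x + y \<in> A K" "x * y \<in> A K"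
    by (auto simp: star_subalgebra_def)
  with K show "x + y \<in> (\<Union>I\<in>\<J>. A I)" "x * y \<in> (\<Union>I\<in>\<J>. A I)"
    by blast+
next
  fix x r assume "x \<in> (\<Union>I\<in>\<J>. A I)"
  then obtain K where "K \<in> \<J>" "x \<in> A K"
    by blast
  with sub show "r *\<^sub>R x \<in> (\<Union>I\<in>\<J>. A I)" "st x \<in> (\<Union>I\<in>\<J>. A I)"
    by (auto simp: star_subalgebra_def intro!: bexI[of _ K])
qed

lemma subset_quasilocal: "I \<in> Jz z \<Longrightarrow> A I \<subseteq> quasilocal z A"
  unfolding quasilocal_def by (rule subset_trans[OF UN_upper closure_subset])

lemma quasilocal_mono: "(\<And>I. I \<in> Jz z \<Longrightarrow> A I \<subseteq> B I) \<Longrightarrow> quasilocal z A \<subseteq> quasilocal z B"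
  unfolding quasilocal_def by (intro closure_mono UN_mono) auto

lemma star_subalgebra_quasilocal:
  assumes "star_algebra st ii" and z: "z \<in> S1"
    and sub: "\<forall>I\<in>Jz z. star_subalgebra st ii (A I)"
    and mono: "\<forall>I\<in>Jz z. \<forall>J\<in>Jz z. I \<subseteq> J \<longrightarrow> A I \<subseteq> A J"
  shows "star_subalgebra st ii (quasilocal z A)"
proof -
  have "\<forall>I\<in>Jz z. \<forall>J\<in>Jz z. \<exists>K\<in>Jz z. A I \<subseteq> A K \<and> A J \<subseteq> A K"
  proof (intro ballI)
    fix I J assume "I \<in> Jz z" "J \<in> Jz z"
    then obtain K where "K \<in> Jz z" "I \<subseteq> K" "J \<subseteq> K"
      using Jz_directed[OF z] by blast
    with mono \<open>I \<in> Jz z\<close> \<open>J \<in> Jz z\<close> show "\<exists>K\<in>Jz z. A I \<subseteq> A K \<and> A J \<subseteq> A K"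
      by blast
  qed
  with Jz_nonempty[OF z] sub have "star_subalgebra st ii (\<Union>I\<in>Jz z. A I)"
    by (rule star_subalgebra_directed_UN)
  with assms(1) show ?thesis
    unfolding quasilocal_def by (rule star_subalgebra_closure)
qed

lemma net_of_subfactors_quasilocal:
  assumes "net_of_subfactors st ii z N M"
  shows "star_subalgebra st ii (quasilocal z N)" "star_subalgebra st ii (quasilocal z M)"
    "quasilocal z N \<subseteq> quasilocal z M"
proof -
  have sa: "star_algebra st ii" and z: "z \<in> S1"
    and subN: "\<forall>I\<in>Jz z. star_subalgebra st ii (N I)" and subM: "\<forall>I\<in>Jz z. star_subalgebra st ii (M I)"
    and NM: "\<forall>I\<in>Jz z. N I \<subseteq> M I"
    and monoN: "\<forall>I\<in>Jz z. \<forall>J\<in>Jz z. I \<subseteq> J \<longrightarrow> N I \<subseteq> N J"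
    and monoM: "\<forall>I\<in>Jz z. \<forall>J\<in>Jz z. I \<subseteq> J \<longrightarrow> M I \<subseteq> M J"
    using assms by (simp_all add: net_of_subfactors_def)
  show "star_subalgebra st ii (quasilocal z N)"
    by (rule star_subalgebra_quasilocal[OF sa z subN monoN])
  show "star_subalgebra st ii (quasilocal z M)"
    by (rule star_subalgebra_quasilocal[OF sa z subM monoM])
  show "quasilocal z N \<subseteq> quasilocal z M"
    using NM by (intro quasilocal_mono) blast
qed

text \<open>The restriction \<open>f|\<^sub>B\<close> of the paper, extended by the identity off B; this is how
  \<open>\<theta> = \<gamma>|\<^sub>N\<close> and \<open>\<sigma>\<^sub>\<beta>\<close> appear in the theorem.\<close>
definition restrict_endo :: "'a set \<Rightarrow> ('a \<Rightarrow> 'a) \<Rightarrow> 'a \<Rightarrow> 'a" where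
  "restrict_endo B f x = (if x \<in> B then f x else x)"

lemma star_endo_comp:
  assumes "star_endo st ii A g" and "star_endo st ii A f"
  shows "star_endo st ii A (g \<circ> f)"
  using assms unfolding star_endo_def by simp

lemma star_endo_restrict_endo:
  assumes f: "star_endo st ii A f" and B: "star_subalgebra st ii B" "B \<subseteq> A" "f ` B \<subseteq> B"
  shows "star_endo st ii B (restrict_endo B f)"
proof -
  have "star_endo st ii B f"
    using f B(2,3) unfolding star_endo_def by blast
  with B(1) show ?thesis
    unfolding star_endo_def star_subalgebra_def restrict_endo_def by auto
qed

lemma Ad_mult:
  assumes "star_algebra st ii"
  shows "Ad st (u * v) x = Ad st u (Ad st v x)"
  using assms by (simp add: Ad_def star_algebra_def mult.assoc)

lemma star_endo_Ad:
  assumes "star_endo st ii A f" and "star_subalgebra st ii A" and "u \<in> A" and "x \<in> A"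
  shows "f (Ad st u x) = Ad st (f u) (f x)"
  using assms by (simp add: Ad_def star_endo_def star_subalgebra_def)

lemma unitary_in_mult:
  assumes "star_algebra st ii" and "star_subalgebra st ii A"
    and "unitary_in st A u" and "unitary_in st A v"
  shows "unitary_in st A (u * v)"
proof -
  have "st (u * v) * (u * v) = st v * (st u * u) * v" "u * v * st (u * v) = u * (v * st v) * st u"
    using assms(1) by (simp_all add: star_algebra_def mult.assoc)
  with assms(2-) show ?thesis
    by (simp add: unitary_in_def star_subalgebra_def)
qed

lemma unitary_in_star_endo_image:
  assumes f: "star_endo st ii A f" and A: "star_subalgebra st ii A" and "f ` A \<subseteq> B"
    and u: "unitary_in st A u"
  shows "unitary_in st B (f u)"
proof -
  have "u \<in> A" "st u \<in> A"
    using u A by (auto simp: unitary_in_def star_subalgebra_def)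
  with f have "st (f u) * f u = f (st u * u)" "f u * st (f u) = f (u * st u)"
    by (simp_all add: star_endo_def)
  with f u have "st (f u) * f u = 1" "f u * st (f u) = 1"
    by (simp_all add: star_endo_def unitary_in_def)
  with \<open>u \<in> A\<close> assms(3) show ?thesis
    by (auto simp: unitary_in_def)
qed

lemma localized_in_subnet:
  assumes "\<forall>J\<in>Jz z. N J \<subseteq> M J" and "localized_in z M f I"
  shows "localized_in z N f I"
  using assms unfolding localized_in_def by blast

lemma localized_in_restrict_endo_comp:
  assumes "localized_in z A f I" and "localized_in z A (restrict_endo B g) I"
  shows "localized_in z A (restrict_endo B (g \<circ> f)) I"
  using assms unfolding localized_in_def restrict_endo_def by (metis comp_apply)

lemma localized_in_Ad_restrict_endo_iff:
  assumes "\<forall>J\<in>Jz z. A J \<subseteq> B"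
  shows "localized_in z A (Ad st w \<circ> restrict_endo B f) I \<longleftrightarrow> localized_in z A (Ad st w \<circ> f) I"
  using assms unfolding localized_in_def restrict_endo_def by auto

lemma localized_in_Ad_comp:
  assumes sa: "star_algebra st ii" and A: "star_subalgebra st ii A" and g: "star_endo st ii A g"
    and f: "\<forall>x\<in>A. f x \<in> A" and Q: "Q \<in> A" and NA: "\<forall>J\<in>Jz z. N J \<subseteq> A"
    and Qf: "localized_in z N (Ad st Q \<circ> f) I" and ug: "localized_in z N (Ad st u \<circ> g) I"
  shows "localized_in z N (Ad st (u * g Q) \<circ> (g \<circ> f)) I"
  unfolding localized_in_def
proof (intro ballI impI)
  fix J x assume J: "J \<in> Jz z" "J \<subseteq> compl_int I" and x: "x \<in> N J"
  have "x \<in> A" using NA J x by blast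
  have "(Ad st (u * g Q) \<circ> (g \<circ> f)) x = Ad st u (Ad st (g Q) (g (f x)))"
    by (simp add: Ad_mult[OF sa])
  also have "Ad st (g Q) (g (f x)) = g (Ad st Q (f x))"
    using star_endo_Ad[OF g A Q] f \<open>x \<in> A\<close> by simp
  also have "Ad st Q (f x) = x"
    using Qf J x unfolding localized_in_def by auto
  also have "Ad st u (g x) = x"
    using ug J x unfolding localized_in_def by auto
  finally show "(Ad st (u * g Q) \<circ> (g \<circ> f)) x = x" .
qed

lemma star_endo_sigma_restriction:
  assumes net: "net_of_subfactors st ii z N M"
    and \<gamma>: "star_endo st ii (quasilocal z M) \<gamma>" "\<gamma> ` quasilocal z M \<subseteq> quasilocal z N"
    and \<beta>: "star_endo st ii (quasilocal z M) \<beta>"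
  shows "star_endo st ii (quasilocal z N) (restrict_endo (quasilocal z N) (\<gamma> \<circ> \<beta>))"
proof (rule star_endo_restrict_endo)
  show "star_endo st ii (quasilocal z M) (\<gamma> \<circ> \<beta>)"
    using \<gamma>(1) \<beta> by (rule star_endo_comp)
  show "(\<gamma> \<circ> \<beta>) ` quasilocal z N \<subseteq> quasilocal z N"
    using net_of_subfactors_quasilocal(3)[OF net] \<beta> \<gamma>(2) by (auto simp: star_endo_def)
  show "star_subalgebra st ii (quasilocal z N)" "quasilocal z N \<subseteq> quasilocal z M"
    using net_of_subfactors_quasilocal[OF net] by simp_all
qed

lemma localized_in_sigma_restriction:
  assumes net: "net_of_subfactors st ii z N M" and \<beta>: "localized_in z M \<beta> I"
    and \<theta>: "localized_in z N (restrict_endo (quasilocal z N) \<gamma>) I"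
  shows "localized_in z N (restrict_endo (quasilocal z N) (\<gamma> \<circ> \<beta>)) I"
proof (rule localized_in_restrict_endo_comp[OF _ \<theta>])
  have "\<forall>J\<in>Jz z. N J \<subseteq> M J"
    using net by (simp add: net_of_subfactors_def)
  then show "localized_in z N \<beta> I"
    using \<beta> by (rule localized_in_subnet)
qed

lemma unitary_in_transporter:
  assumes net: "net_of_subfactors st ii z N M"
    and \<gamma>: "star_endo st ii (quasilocal z M) \<gamma>" "\<gamma> ` quasilocal z M \<subseteq> quasilocal z N"
    and Q: "unitary_in st (quasilocal z M) Q" and u: "unitary_in st (quasilocal z N) u"
  shows "unitary_in st (quasilocal z N) (u * \<gamma> Q)"
proof (rule unitary_in_mult[OF _ net_of_subfactors_quasilocal(1)[OF net] u])
  show "star_algebra st ii"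
    using net by (simp add: net_of_subfactors_def)
  show "unitary_in st (quasilocal z N) (\<gamma> Q)"
    using unitary_in_star_endo_image[OF \<gamma>(1) net_of_subfactors_quasilocal(2)[OF net] \<gamma>(2) Q] .
qed

lemma localized_in_Ad_transporter:
  assumes net: "net_of_subfactors st ii z N M"
    and \<gamma>: "star_endo st ii (quasilocal z M) \<gamma>" and \<beta>: "star_endo st ii (quasilocal z M) \<beta>"
    and Q: "unitary_in st (quasilocal z M) Q" "localized_in z M (Ad st Q \<circ> \<beta>) I"
    and u: "localized_in z N (Ad st u \<circ> \<gamma>) I"
  shows "localized_in z N (Ad st (u * \<gamma> Q) \<circ> (\<gamma> \<circ> \<beta>)) I"
proof (rule localized_in_Ad_comp[OF _ net_of_subfactors_quasilocal(2)[OF net] \<gamma>])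
  have NM: "\<forall>J\<in>Jz z. N J \<subseteq> M J"
    using net by (simp add: net_of_subfactors_def)
  show "star_algebra st ii"
    using net by (simp add: net_of_subfactors_def)
  show "\<forall>J\<in>Jz z. N J \<subseteq> quasilocal z M"
    using NM subset_quasilocal[of _ z M] by blast
  show "localized_in z N (Ad st Q \<circ> \<beta>) I"
    using NM Q(2) by (rule localized_in_subnet)
  show "\<forall>x\<in>quasilocal z M. \<beta> x \<in> quasilocal z M"
    using \<beta> by (simp add: star_endo_def)
  show "Q \<in> quasilocal z M"
    using Q(1) by (simp add: unitary_in_def)
qed (rule u)

theorem lemma3p18:
  fixes st :: "'a::real_normed_algebra_1 \<Rightarrow> 'a" and ii :: 'a
    and z :: complex and N M :: "complex set \<Rightarrow> 'a set"
    and Io :: "complex set" and \<gamma> \<beta> :: "'a \<Rightarrow> 'a"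
  assumes net: "net_of_subfactors st ii z N M"
    and Io: "Io \<in> Jz z"
    and gamma_endo: "star_endo st ii (quasilocal z M) \<gamma>"
    and gamma_range: "\<gamma> ` quasilocal z M \<subseteq> quasilocal z N"
    and theta: "(\<lambda>x. if x \<in> quasilocal z N then \<gamma> x else x) \<in> Delta st ii z N Io"
    and beta_endo: "star_endo st ii (quasilocal z M) \<beta>"
    and beta_loc: "localized_in z M \<beta> Io"
    and beta_transp: "\<forall>I1\<in>Jz z. \<exists>Q. unitary_in st (quasilocal z M) Q \<and>
                          localized_in z M (Ad st Q \<circ> \<beta>) I1"
  shows "(\<lambda>x. if x \<in> quasilocal z N then \<gamma> (\<beta> x) else x) \<in> Delta st ii z N Io \<and>
    (\<forall>I1\<in>Jz z. \<forall>Q u. unitary_in st (quasilocal z M) Q \<longrightarrow>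
        localized_in z M (Ad st Q \<circ> \<beta>) I1 \<longrightarrow>
        unitary_in st (quasilocal z N) u \<longrightarrow>
        localized_in z N (Ad st u \<circ> \<gamma>) I1 \<longrightarrow>
        localized_in z N (Ad st (u * \<gamma> Q) \<circ> (\<lambda>x. \<gamma> (\<beta> x))) I1)"
proof -
  let ?N = "quasilocal z N"
  let ?\<sigma> = "restrict_endo ?N (\<gamma> \<circ> \<beta>)" and ?\<theta> = "restrict_endo ?N \<gamma>"
  have \<theta>: "?\<theta> \<in> Delta st ii z N Io" and \<sigma>_def: "(\<lambda>x. if x \<in> ?N then \<gamma> (\<beta> x) else x) = ?\<sigma>"
    using theta by (simp_all add: restrict_endo_def[abs_def] comp_def)
  have N_local: "\<forall>J\<in>Jz z. N J \<subseteq> ?N"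
    by (simp add: subset_quasilocal)
  have "?\<sigma> \<in> Delta st ii z N Io"
    unfolding Delta_def
  proof (intro CollectI conjI ballI)
    show "star_endo st ii ?N ?\<sigma>"
      by (rule star_endo_sigma_restriction[OF net gamma_endo gamma_range beta_endo])
    show "localized_in z N ?\<sigma> Io"
      using \<theta> by (intro localized_in_sigma_restriction[OF net beta_loc]) (simp add: Delta_def)
    fix J assume J: "J \<in> Jz z"
    obtain Q where Q: "unitary_in st (quasilocal z M) Q" "localized_in z M (Ad st Q \<circ> \<beta>) J"
      using beta_transp J by blast
    obtain u where u: "unitary_in st ?N u" "localized_in z N (Ad st u \<circ> \<gamma>) J"
      using \<theta> J localized_in_Ad_restrict_endo_iff[OF N_local] by (auto simp: Delta_def)
    show "\<exists>w. unitary_in st ?N w \<and> localized_in z N (Ad st w \<circ> ?\<sigma>) J"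
      using unitary_in_transporter[OF net gamma_endo gamma_range Q(1) u(1)]
        localized_in_Ad_transporter[OF net gamma_endo beta_endo Q u(2)]
        localized_in_Ad_restrict_endo_iff[OF N_local] by blast
  qed
  with localized_in_Ad_transporter[OF net gamma_endo beta_endo] show ?thesis
    unfolding \<sigma>_def by (simp add: comp_def)
qed

end
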